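(* For any choice of $\hat R>0$, the truncated perturbed adversary $\mathcal{A}'_\sigma$ is $R$-bounded with $R=1+\sqrt d\hat R$, and is $(r,\frac1T)$-centrally bounded for every $r\ge\sigma\sqrt{2\ln T}$.
   Context: Single parameter setting with Greedy (least squares estimate $\hat\beta^t$ at round $t$). Given an adaptive adversary that at each round picks $\mu_1^t,\dots,\mu_k^t$ with $\|\mu_i^t\|\le1$ as a function of the history, the adversary $\mathcal{A}'_\sigma$ outputs contexts $x_i^t=\mu_i^t+e_i^t$ where $e_i^t=(Q^t)^{-1}z_i^t$, $Q^t$ is an orthonormal matrix with $Q^t\hat\beta^t=(\|\hat\beta^t\|,0,\dots,0)$, and the coordinates of each $z_i^t\in\mathbb{R}^d$ are drawn independently from $\mathcal{N}(0,\sigma^2)$ conditioned on lying in $[-\hat R,\hat R]$. $R$-bounded: with probability 1, $\|x_i^t\|\le R$ for all $i,t$. $(r,\delta')$-centrally bounded: for each history, arm $i$ and fixed unit vector $w$, $w\cdot e_i^t\le r$ with probability at least $1-\delta'$. *)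

theory Defs
  imports "HOL-Probability.Probability"
begin

definition trunc_normal :: "real \<Rightarrow> real \<Rightarrow> real measure" where
  "trunc_normal \<sigma> Rh =
     uniform_measure (density lborel (\<lambda>x. ennreal (normal_density 0 \<sigma> x))) {-Rh..Rh}"

definition trunc_noise :: "real \<Rightarrow> real \<Rightarrow> (real^'n::finite) measure" where
  "trunc_noise \<sigma> Rh =
     distr (PiM UNIV (\<lambda>_::'n. trunc_normal \<sigma> Rh)) borel (\<lambda>f. vec_lambda f)"

end

theory Submission
  imports Defs
begin

(*
  The noise z has i.i.d. coordinates in [-Rh, Rh], so norm z <= sqrt d * Rh, and Q^-1 = Q^T is an
  isometry; the bound on the contexts is then the triangle inequality.

  For the central bound, w . Q^-1 z = (Q w) . z with Q w a unit vector. A centred Gaussian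
  conditioned on a symmetric interval [-a, a] stays sub-Gaussian with parameter sigma: by symmetry
  its moment generating function at t is the conditional mean of cosh (t x), and as cosh (t x) is
  at most cosh (t a) inside the interval and at least cosh (t a) outside, conditioning on the
  interval can only lower this mean below E cosh (t x) = exp (t^2 sigma^2 / 2). By independence
  (Q w) . z is sub-Gaussian with the same parameter, and the Chernoff bound gives the tail
  exp (- r^2 / (2 sigma^2)) <= 1 / T for r >= sigma sqrt (2 ln T).
*)

lemma (in prob_space) integral_indicator_mult_le:
  fixes g :: "'a \<Rightarrow> real"
  assumes g: "integrable M g" and A: "A \<in> events"
    and inside: "\<And>x. x \<in> A \<Longrightarrow> g x \<le> c" and outside: "\<And>x. x \<in> space M - A \<Longrightarrow> c \<le> g x"
  shows "(\<integral>x. indicator A x * g x \<partial>M) \<le> prob A * expectation g"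
proof -
  have iA: "integrable M (\<lambda>x. indicator A x * g x)"
    using integrable_mult_indicator[OF A g] by simp
  have "0 \<le> (c - g x) * (indicator A x - prob A)" if "x \<in> space M" for x
    using that inside[of x] outside[of x] prob_le_1[of A]
    by (cases "x \<in> A") (auto intro: mult_nonpos_nonpos mult_nonpos_nonneg)
  then have "0 \<le> (\<integral>x. (c - g x) * (indicator A x - prob A) \<partial>M)"
    by (intro integral_nonneg_AE) auto
  also have "(\<lambda>x. (c - g x) * (indicator A x - prob A))
      = (\<lambda>x. (c * indicator A x - c * prob A) - (indicator A x * g x - prob A * g x))"
    by (auto simp: algebra_simps)
  also have "(\<integral>x. (c * indicator A x - c * prob A) - (indicator A x * g x - prob A * g x) \<partial>M)
      = prob A * expectation g - (\<integral>x. indicator A x * g x \<partial>M)"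
  proof -
    have "integrable M (indicator A :: 'a \<Rightarrow> real)"
      using A by (simp add: emeasure_eq_measure)
    then show ?thesis
      using A iA g by (simp add: prob_space)
  qed
  finally show ?thesis by simp
qed

lemma cosh_real_le_iff_abs_le: "cosh x \<le> cosh y \<longleftrightarrow> \<bar>x\<bar> \<le> \<bar>y :: real\<bar>"
  by (metis abs_ge_zero cosh_real_abs cosh_real_nonneg_le_iff)

definition sub_gaussian :: "real measure \<Rightarrow> real \<Rightarrow> bool" where
  "sub_gaussian M s \<longleftrightarrow> (\<forall>t. (\<integral>\<^sup>+x. ennreal (exp (t * x)) \<partial>M) \<le> ennreal (exp (t\<^sup>2 * s\<^sup>2 / 2)))"

lemma sub_gaussian_tail:
  fixes M :: "real measure"
  assumes sg: "sub_gaussian M s" and "s > 0" and sets_M: "sets M = sets borel" and "0 \<le> r"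
  shows "emeasure M {x \<in> space M. r \<le> x} \<le> ennreal (exp (- r\<^sup>2 / (2 * s\<^sup>2)))"
proof (cases "r = 0")
  case True
  have "emeasure M {x \<in> space M. r \<le> x} \<le> emeasure M (space M)"
    by (intro emeasure_mono) auto
  also have "\<dots> = (\<integral>\<^sup>+x. ennreal (exp (0 * x)) \<partial>M)"
    by simp
  also have "\<dots> \<le> 1"
    using sg[unfolded sub_gaussian_def, THEN spec[of _ 0]] by simp
  finally show ?thesis using True by simp
next
  case False
  define l where "l = r / s\<^sup>2"
  have "l > 0" using False \<open>0 \<le> r\<close> \<open>s > 0\<close> by (simp add: l_def)
  have [measurable]: "(\<lambda>x. x) \<in> borel_measurable M"
    using measurable_ident_sets[OF sets_M] by simp
  have "emeasure M {x \<in> space M. r \<le> x}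
      \<le> ennreal (exp (- l * r)) * (\<integral>\<^sup>+x. ennreal (exp (l * x)) * indicator (space M) x \<partial>M)"
    using Chernoff_ineq_nn_integral_ge[OF \<open>l > 0\<close>, of "space M" M "\<lambda>x. x" r] by simp
  also have "(\<integral>\<^sup>+x. ennreal (exp (l * x)) * indicator (space M) x \<partial>M) = (\<integral>\<^sup>+x. ennreal (exp (l * x)) \<partial>M)"
    by (intro nn_integral_cong) simp
  also have "ennreal (exp (- l * r)) * \<dots> \<le> ennreal (exp (- l * r)) * ennreal (exp (l\<^sup>2 * s\<^sup>2 / 2))"
    using sg by (intro mult_left_mono) (auto simp: sub_gaussian_def)
  also have "\<dots> = ennreal (exp (- r\<^sup>2 / (2 * s\<^sup>2)))"
    using \<open>s > 0\<close> by (simp add: l_def field_simps power2_eq_square flip: ennreal_mult exp_add)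
  finally show ?thesis .
qed

lemma sub_gaussian_distr_PiM_sum:
  fixes M :: "real measure" and I :: "'i set" and c :: "'i \<Rightarrow> real"
  assumes "finite I" and "sigma_finite_measure M" and sets_M: "sets M = sets borel"
    and "sub_gaussian M s"
  shows "sub_gaussian (distr (PiM I (\<lambda>_. M)) borel (\<lambda>f. \<Sum>i\<in>I. c i * f i)) (s * sqrt (\<Sum>i\<in>I. (c i)\<^sup>2))"
  unfolding sub_gaussian_def
proof
  fix t :: real
  interpret product_sigma_finite "\<lambda>_. M"
    using assms(2) by (simp add: product_sigma_finite_def)
  have [measurable]: "(\<lambda>x. x) \<in> borel_measurable M"
    using measurable_ident_sets[OF sets_M] by simp
  have "(\<integral>\<^sup>+x. ennreal (exp (t * x)) \<partial>distr (PiM I (\<lambda>_. M)) borel (\<lambda>f. \<Sum>i\<in>I. c i * f i))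
      = (\<integral>\<^sup>+f. (\<Prod>i\<in>I. ennreal (exp ((t * c i) * f i))) \<partial>PiM I (\<lambda>_. M))"
    by (subst nn_integral_distr)
       (auto intro!: nn_integral_cong simp: \<open>finite I\<close> sum_distrib_left exp_sum prod_ennreal mult.assoc)
  also have "\<dots> = (\<Prod>i\<in>I. \<integral>\<^sup>+x. ennreal (exp ((t * c i) * x)) \<partial>M)"
    using \<open>finite I\<close> by (intro product_nn_integral_prod) auto
  also have "\<dots> \<le> (\<Prod>i\<in>I. ennreal (exp ((t * c i)\<^sup>2 * s\<^sup>2 / 2)))"
    using \<open>sub_gaussian M s\<close> by (intro prod_mono_ennreal) (simp add: sub_gaussian_def)
  also have "\<dots> = ennreal (exp (t\<^sup>2 * (s * sqrt (\<Sum>i\<in>I. (c i)\<^sup>2))\<^sup>2 / 2))"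
    by (simp add: \<open>finite I\<close> prod_ennreal exp_sum power_mult_distrib sum_distrib_left sum_divide_distrib
        sum_nonneg mult_ac)
  finally show "(\<integral>\<^sup>+x. ennreal (exp (t * x)) \<partial>distr (PiM I (\<lambda>_. M)) borel (\<lambda>f. \<Sum>i\<in>I. c i * f i))
      \<le> ennreal (exp (t\<^sup>2 * (s * sqrt (\<Sum>i\<in>I. (c i)\<^sup>2))\<^sup>2 / 2))" .
qed

lemma measurable_vec_lambda:
  assumes "sets M = sets (borel :: real measure)"
  shows "(\<lambda>f. vec_lambda f :: real^'n::finite) \<in> borel_measurable (PiM UNIV (\<lambda>_. M))"
proof (subst borel_measurable_euclidean_space, intro ballI)
  fix b :: "real^'n" assume "b \<in> Basis"
  then obtain j u where b: "b = axis j u" "u \<in> (Basis :: real set)" unfolding Basis_vec_def by auto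
  have "(\<lambda>f. f j) \<in> measurable (PiM UNIV (\<lambda>_. M)) M"
    by (rule measurable_component_singleton) simp
  then have "(\<lambda>f. f j) \<in> borel_measurable (PiM UNIV (\<lambda>_. M))"
    using measurable_cong_sets[OF refl assms] by blast
  then show "(\<lambda>f. vec_lambda f \<bullet> b) \<in> borel_measurable (PiM UNIV (\<lambda>_. M))"
    unfolding b inner_axis using b(2) by simp
qed

lemma norm_le_sqrt_card_mult:
  fixes z :: "real^'n::finite" assumes "\<And>i. \<bar>z $ i\<bar> \<le> a"
  shows "norm z \<le> sqrt (real CARD('n)) * a"
proof -
  have "infnorm z \<le> a"
    unfolding infnorm_cart using assms by (auto intro!: cSup_least)
  then show ?thesis
    using norm_le_infnorm[of z] by (simp add: mult_left_mono order_trans)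
qed

lemma matrix_inv_orthogonal_matrix:
  fixes Q :: "real^'n^'n" assumes "orthogonal_matrix Q"
  shows "matrix_inv Q = transpose Q"
proof -
  have Q: "transpose Q ** Q = mat 1" "Q ** transpose Q = mat 1"
    using assms by (auto simp: orthogonal_matrix_def)
  have "Q ** matrix_inv Q = mat 1 \<and> matrix_inv Q ** Q = mat 1"
    unfolding matrix_inv_def by (rule someI[of _ "transpose Q"]) (simp add: Q)
  then show ?thesis
    by (metis Q(2) matrix_mul_assoc matrix_mul_lid matrix_mul_rid)
qed

lemma orthogonal_matrix_norm:
  fixes Q :: "real^'n^'n" assumes "orthogonal_matrix Q"
  shows "norm (Q *v x) = norm x"
  using assms by (simp add: orthogonal_transformation_matrix orthogonal_transformation_norm)

lemma normal_density_mult_exp: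
  fixes \<sigma> t x :: real assumes "\<sigma> > 0"
  shows "normal_density 0 \<sigma> x * exp (t * x) = exp (t\<^sup>2 * \<sigma>\<^sup>2 / 2) * normal_density (t * \<sigma>\<^sup>2) \<sigma> x"
proof -
  have "- (x - 0)\<^sup>2 / (2 * \<sigma>\<^sup>2) + t * x = t\<^sup>2 * \<sigma>\<^sup>2 / 2 + - (x - t * \<sigma>\<^sup>2)\<^sup>2 / (2 * \<sigma>\<^sup>2)"
    using assms by (simp add: field_simps power2_eq_square)
  then show ?thesis
    unfolding normal_density_def by (simp add: mult_ac flip: exp_add)
qed

lemma has_bochner_integral_normal_exp:
  fixes \<sigma> t :: real assumes "\<sigma> > 0"
  shows "has_bochner_integral (density lborel (normal_density 0 \<sigma>)) (\<lambda>x. exp (t * x)) (exp (t\<^sup>2 * \<sigma>\<^sup>2 / 2))"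
proof (rule has_bochner_integral_density)
  have shifted: "has_bochner_integral lborel (normal_density (t * \<sigma>\<^sup>2) \<sigma>) 1"
    using assms by (simp add: has_bochner_integral_iff)
  show "has_bochner_integral lborel (\<lambda>x. normal_density 0 \<sigma> x *\<^sub>R exp (t * x)) (exp (t\<^sup>2 * \<sigma>\<^sup>2 / 2))"
    using has_bochner_integral_mult_right[OF shifted, of "exp (t\<^sup>2 * \<sigma>\<^sup>2 / 2)"]
    by (simp add: normal_density_mult_exp[OF assms])
qed auto

lemma has_bochner_integral_normal_cosh:
  fixes \<sigma> t :: real assumes "\<sigma> > 0"
  shows "has_bochner_integral (density lborel (normal_density 0 \<sigma>)) (\<lambda>x. cosh (t * x)) (exp (t\<^sup>2 * \<sigma>\<^sup>2 / 2))"
proof -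
  have "has_bochner_integral (density lborel (normal_density 0 \<sigma>))
      (\<lambda>x. (exp (t * x) + exp ((- t) * x)) / 2) ((exp (t\<^sup>2 * \<sigma>\<^sup>2 / 2) + exp ((- t)\<^sup>2 * \<sigma>\<^sup>2 / 2)) / 2)"
    by (intro has_bochner_integral_divide_zero has_bochner_integral_add has_bochner_integral_normal_exp assms)
  then show ?thesis by (simp add: cosh_field_def)
qed

lemma integral_normal_reflect:
  fixes f :: "real \<Rightarrow> real" assumes [measurable]: "f \<in> borel_measurable borel"
  shows "(\<integral>x. f (- x) \<partial>density lborel (normal_density 0 \<sigma>)) = (\<integral>x. f x \<partial>density lborel (normal_density 0 \<sigma>))"
proof -
  have "(\<integral>x. normal_density 0 \<sigma> x * f x \<partial>lborel) = (\<integral>x. normal_density 0 \<sigma> (- x) * f (- x) \<partial>lborel)"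
    by (subst lborel_integral_real_affine[where c = "-1" and t = 0]) auto
  then show ?thesis
    by (simp add: integral_density normal_density_def) metis
qed

lemma integrable_normal_indicator_exp:
  fixes \<sigma> a t :: real assumes "\<sigma> > 0"
  shows "integrable (density lborel (normal_density 0 \<sigma>)) (\<lambda>x. indicator {-a..a} x * exp (t * x))"
proof -
  interpret N: prob_space "density lborel (normal_density 0 \<sigma>)"
    using assms by (rule prob_space_normal_density)
  have "t * x \<le> \<bar>t\<bar> * a" if "\<bar>x\<bar> \<le> a" for x
    using abs_ge_self[of "t * x"] mult_left_mono[OF that abs_ge_zero[of t]] by (simp add: abs_mult)
  then show ?thesis
    by (intro N.integrable_const_bound[where B = "exp (\<bar>t\<bar> * a)"])
       (auto split: split_indicator simp: abs_le_iff)
qed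

lemma integral_normal_indicator_exp_eq_cosh:
  fixes \<sigma> a t :: real assumes "\<sigma> > 0"
  shows "(\<integral>x. indicator {-a..a} x * exp (t * x) \<partial>density lborel (normal_density 0 \<sigma>))
       = (\<integral>x. indicator {-a..a} x * cosh (t * x) \<partial>density lborel (normal_density 0 \<sigma>))"
  (is "?I t = _")
proof -
  let ?N = "density lborel (normal_density 0 \<sigma>)"
  have "indicator {-a..a} (- x) = (indicator {-a..a} x :: real)" for x
    by (auto simp: indicator_def)
  then have "?I (- t) = ?I t"
    using integral_normal_reflect[of "\<lambda>x. indicator {-a..a} x * exp (t * x)" \<sigma>] by simp
  have "(\<lambda>x. indicator {-a..a} x * cosh (t * x))
      = (\<lambda>x. (indicator {-a..a} x * exp (t * x) + indicator {-a..a} x * exp ((- t) * x)) / 2)"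
    by (simp add: cosh_field_def add_divide_distrib distrib_left)
  then have "(\<integral>x. indicator {-a..a} x * cosh (t * x) \<partial>?N) = (?I t + ?I (- t)) / 2"
    using integrable_normal_indicator_exp[OF assms, of a t] integrable_normal_indicator_exp[OF assms, of a "-t"]
    by simp
  with \<open>?I (- t) = ?I t\<close> show ?thesis by simp
qed

lemma emeasure_normal_interval_pos:
  fixes \<sigma> a :: real assumes "\<sigma> > 0" and "a > 0"
  shows "emeasure (density lborel (normal_density 0 \<sigma>)) {-a..a} \<noteq> 0"
proof
  assume "emeasure (density lborel (normal_density 0 \<sigma>)) {-a..a} = 0"
  then have "AE x in lborel. x \<in> {-a..a} \<longrightarrow> normal_density 0 \<sigma> x = 0"
    using null_sets_density_iff[of "\<lambda>x. ennreal (normal_density 0 \<sigma> x)" lborel "{-a..a}"] by auto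
  then have "AE x in lborel. x \<notin> {-a..a}"
    using normal_density_pos[OF assms(1)] by (auto simp: less_le)
  then have "emeasure lborel {-a..a} = 0"
    by (subst (asm) AE_iff_measurable[of "{-a..a}"]) auto
  with assms(2) show False by simp
qed

lemma prob_space_trunc_normal:
  fixes \<sigma> a :: real assumes "\<sigma> > 0" and "a > 0"
  shows "prob_space (trunc_normal \<sigma> a)"
proof -
  interpret N: prob_space "density lborel (normal_density 0 \<sigma>)"
    using assms(1) by (rule prob_space_normal_density)
  show ?thesis
    unfolding trunc_normal_def
    by (intro prob_space_uniform_measure emeasure_normal_interval_pos assms) simp
qed

lemma sub_gaussian_trunc_normal:
  fixes \<sigma> a :: real assumes \<sigma>: "\<sigma> > 0" and a: "a > 0"
  shows "sub_gaussian (trunc_normal \<sigma> a) \<sigma>"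
  unfolding sub_gaussian_def
proof
  fix t :: real
  let ?N = "density lborel (normal_density 0 \<sigma>)" and ?A = "{-a..a}"
  interpret N: prob_space ?N using \<sigma> by (rule prob_space_normal_density)
  have cosh_int: "has_bochner_integral ?N (\<lambda>x. cosh (t * x)) (exp (t\<^sup>2 * \<sigma>\<^sup>2 / 2))"
    using \<sigma> by (rule has_bochner_integral_normal_cosh)
  have "(\<integral>x. indicator ?A x * exp (t * x) \<partial>?N) = (\<integral>x. indicator ?A x * cosh (t * x) \<partial>?N)"
    using \<sigma> by (rule integral_normal_indicator_exp_eq_cosh)
  also have "\<dots> \<le> N.prob ?A * N.expectation (\<lambda>x. cosh (t * x))"
  proof (rule N.integral_indicator_mult_le)
    show "integrable ?N (\<lambda>x. cosh (t * x))"
      using cosh_int by (simp add: has_bochner_integral_iff)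
    show "cosh (t * x) \<le> cosh (t * a)" if "x \<in> ?A" for x
      using that by (auto simp: cosh_real_le_iff_abs_le abs_mult intro: mult_left_mono)
    show "cosh (t * a) \<le> cosh (t * x)" if "x \<in> space ?N - ?A" for x
      using that a by (auto simp: cosh_real_le_iff_abs_le abs_mult intro: mult_left_mono)
  qed simp
  also have "\<dots> = N.prob ?A * exp (t\<^sup>2 * \<sigma>\<^sup>2 / 2)"
    using cosh_int by (simp add: has_bochner_integral_iff)
  finally have le: "(\<integral>x. indicator ?A x * exp (t * x) \<partial>?N) \<le> N.prob ?A * exp (t\<^sup>2 * \<sigma>\<^sup>2 / 2)" .
  have "(\<integral>\<^sup>+x. ennreal (exp (t * x)) \<partial>trunc_normal \<sigma> a)
      = (\<integral>\<^sup>+x. ennreal (exp (t * x)) * indicator ?A x \<partial>?N) / emeasure ?N ?A"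
    unfolding trunc_normal_def by (rule nn_integral_uniform_measure) auto
  also have "(\<integral>\<^sup>+x. ennreal (exp (t * x)) * indicator ?A x \<partial>?N)
      = ennreal (\<integral>x. indicator ?A x * exp (t * x) \<partial>?N)"
    by (subst nn_integral_eq_integral[symmetric])
       (auto intro!: nn_integral_cong integrable_normal_indicator_exp \<sigma> split: split_indicator)
  also have "\<dots> / emeasure ?N ?A \<le> ennreal (exp (t\<^sup>2 * \<sigma>\<^sup>2 / 2))"
  proof (rule divide_le_posI_ennreal)
    show "0 < emeasure ?N ?A"
      using emeasure_normal_interval_pos[OF \<sigma> a] by (simp add: zero_less_iff_neq_zero)
    show "ennreal (\<integral>x. indicator ?A x * exp (t * x) \<partial>?N) \<le> emeasure ?N ?A * ennreal (exp (t\<^sup>2 * \<sigma>\<^sup>2 / 2))"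
      using le by (simp add: N.emeasure_eq_measure flip: ennreal_mult)
  qed
  finally show "(\<integral>\<^sup>+x. ennreal (exp (t * x)) \<partial>trunc_normal \<sigma> a) \<le> ennreal (exp (t\<^sup>2 * \<sigma>\<^sup>2 / 2))" .
qed

lemma prob_space_trunc_noise:
  fixes \<sigma> a :: real assumes "\<sigma> > 0" and "a > 0"
  shows "prob_space (trunc_noise \<sigma> a :: (real^'n::finite) measure)"
  unfolding trunc_noise_def
  by (intro prob_space.prob_space_distr prob_space_PiM prob_space_trunc_normal assms
      measurable_vec_lambda) (simp add: trunc_normal_def)

lemma AE_trunc_noise_norm_le:
  fixes \<sigma> a :: real assumes "\<sigma> > 0" and "a > 0"
  shows "AE z in (trunc_noise \<sigma> a :: (real^'n::finite) measure). norm z \<le> sqrt (real CARD('n)) * a"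
proof -
  let ?M = "trunc_normal \<sigma> a"
  have sets_M: "sets ?M = sets borel"
    by (simp add: trunc_normal_def)
  have coordinate: "AE x in ?M. \<bar>x\<bar> \<le> a"
    unfolding trunc_normal_def by (rule AE_uniform_measureI) auto
  have "AE f in PiM UNIV (\<lambda>_::'n. ?M). \<forall>i\<in>UNIV. \<bar>f i\<bar> \<le> a"
    by (intro AE_finite_allI AE_PiM_component[where P = "\<lambda>x. \<bar>x\<bar> \<le> a"] coordinate
        prob_space_trunc_normal assms) auto
  then have "AE f in PiM UNIV (\<lambda>_::'n. ?M). norm (vec_lambda f) \<le> sqrt (real CARD('n)) * a"
    by eventually_elim (simp add: norm_le_sqrt_card_mult)
  moreover have "closed {z::real^'n. norm z \<le> sqrt (real CARD('n)) * a}"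
    by (intro closed_Collect_le continuous_intros)
  ultimately show ?thesis
    unfolding trunc_noise_def by (subst AE_distr_iff) (auto intro: measurable_vec_lambda[OF sets_M])
qed

lemma sub_gaussian_inner_trunc_noise:
  fixes \<sigma> a :: real and v :: "real^'n::finite" assumes "\<sigma> > 0" and "a > 0"
  shows "sub_gaussian (distr (trunc_noise \<sigma> a) borel (\<lambda>z. v \<bullet> z)) (\<sigma> * norm v)"
proof -
  let ?M = "trunc_normal \<sigma> a"
  have sets_M: "sets ?M = sets borel"
    by (simp add: trunc_normal_def)
  have "distr (trunc_noise \<sigma> a) borel (\<lambda>z. v \<bullet> z)
      = distr (PiM UNIV (\<lambda>_::'n. ?M)) borel (\<lambda>f. \<Sum>i\<in>UNIV. v $ i * f i)"
    unfolding trunc_noise_def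
    by (subst distr_distr) (auto intro: measurable_vec_lambda[OF sets_M] simp: comp_def inner_vec_def)
  moreover have "norm v = sqrt (\<Sum>i\<in>UNIV. (v $ i)\<^sup>2)"
    by (simp add: norm_vec_def L2_set_def)
  ultimately show ?thesis
    using sub_gaussian_distr_PiM_sum[where I = UNIV and c = "\<lambda>i. v $ i", OF _ _ sets_M
        sub_gaussian_trunc_normal[OF assms]]
      prob_space_imp_sigma_finite[OF prob_space_trunc_normal[OF assms]] by simp
qed

lemma prob_inner_trunc_noise_le:
  fixes \<sigma> a r :: real and v :: "real^'n::finite"
  assumes "\<sigma> > 0" and "a > 0" and "norm v = 1" and "0 \<le> r"
  shows "measure (trunc_noise \<sigma> a) {z \<in> space (trunc_noise \<sigma> a). v \<bullet> z \<le> r} \<ge> 1 - exp (- r\<^sup>2 / (2 * \<sigma>\<^sup>2))"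
proof -
  let ?S = "trunc_noise \<sigma> a :: (real^'n) measure"
  interpret S: prob_space ?S using assms(1,2) by (rule prob_space_trunc_noise)
  have sets_S: "sets ?S = sets borel" by (simp add: trunc_noise_def)
  have "(\<lambda>z::real^'n. v \<bullet> z) \<in> borel_measurable borel"
    by (intro borel_measurable_continuous_onI continuous_intros)
  then have [measurable]: "(\<lambda>z. v \<bullet> z) \<in> borel_measurable ?S"
    using measurable_cong_sets[OF sets_S refl] by blast
  let ?tail = "{z \<in> space ?S. r \<le> v \<bullet> z}"
  have "emeasure ?S ?tail = emeasure (distr ?S borel (\<lambda>z. v \<bullet> z)) {x \<in> space (distr ?S borel (\<lambda>z. v \<bullet> z)). r \<le> x}"
    by (subst emeasure_distr) (auto intro!: arg_cong[where f = "emeasure ?S"])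
  also have "\<dots> \<le> ennreal (exp (- r\<^sup>2 / (2 * \<sigma>\<^sup>2)))"
    using sub_gaussian_tail[OF sub_gaussian_inner_trunc_noise[OF assms(1,2), of v] _ _ \<open>0 \<le> r\<close>] assms
    by simp
  finally have "S.prob ?tail \<le> exp (- r\<^sup>2 / (2 * \<sigma>\<^sup>2))"
    by (simp add: S.emeasure_eq_measure)
  moreover have "space ?S - ?tail \<subseteq> {z \<in> space ?S. v \<bullet> z \<le> r}"
    by auto
  then have "S.prob (space ?S - ?tail) \<le> S.prob {z \<in> space ?S. v \<bullet> z \<le> r}"
    by (intro S.finite_measure_mono) auto
  ultimately show ?thesis
    using S.prob_compl[of ?tail] by auto
qed

lemma exp_neg_square_le_inverse:
  fixes \<sigma> r :: real and T :: nat assumes "\<sigma> > 0" and "T \<ge> 1" and "r \<ge> \<sigma> * sqrt (2 * ln (real T))"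
  shows "exp (- r\<^sup>2 / (2 * \<sigma>\<^sup>2)) \<le> 1 / real T"
proof -
  have "0 \<le> ln (real T)" using assms(2) by simp
  then have "(\<sigma> * sqrt (2 * ln (real T)))\<^sup>2 \<le> r\<^sup>2"
    using assms by (intro power_mono) auto
  then have "ln (real T) \<le> r\<^sup>2 / (2 * \<sigma>\<^sup>2)"
    using \<open>0 \<le> ln (real T)\<close> assms(1) by (simp add: field_simps)
  then have "exp (- r\<^sup>2 / (2 * \<sigma>\<^sup>2)) \<le> exp (- ln (real T))"
    by simp
  also have "\<dots> = 1 / real T"
    using assms(2) by (simp add: exp_minus inverse_eq_divide)
  finally show ?thesis .
qed

theorem lemma6:
  fixes \<sigma> Rh :: real and T :: nat and i1 :: "'n::finite"
    and \<mu> \<beta> :: "real^'n" and Q :: "real^'n^'n"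
  assumes "\<sigma> > 0" and "Rh > 0" and "T \<ge> 1"
    and "norm \<mu> \<le> 1"
    and "orthogonal_matrix Q"
    and "Q *v \<beta> = (\<chi> j. if j = i1 then norm \<beta> else 0)"
  shows "(AE z in trunc_noise \<sigma> Rh.
            norm (\<mu> + matrix_inv Q *v z) \<le> 1 + sqrt (real CARD('n)) * Rh)
       \<and> (\<forall>w::real^'n. \<forall>r::real. norm w = 1 \<longrightarrow> r \<ge> \<sigma> * sqrt (2 * ln (real T)) \<longrightarrow>
            measure (trunc_noise \<sigma> Rh) {z \<in> space (trunc_noise \<sigma> Rh). w \<bullet> (matrix_inv Q *v z) \<le> r}
              \<ge> 1 - 1 / real T)"
proof
  have Q_inv: "matrix_inv Q = transpose Q"
    using assms(5) by (rule matrix_inv_orthogonal_matrix)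
  have norm_Q_inv: "norm (matrix_inv Q *v z) = norm z" for z
    unfolding Q_inv by (rule orthogonal_matrix_norm) (simp add: assms(5))
  show "AE z in trunc_noise \<sigma> Rh. norm (\<mu> + matrix_inv Q *v z) \<le> 1 + sqrt (real CARD('n)) * Rh"
    using AE_trunc_noise_norm_le[OF assms(1,2)]
    by eventually_elim (use assms(4) norm_triangle_ineq[of \<mu>] norm_Q_inv in \<open>smt (verit)\<close>)
  show "\<forall>w r. norm w = 1 \<longrightarrow> r \<ge> \<sigma> * sqrt (2 * ln (real T)) \<longrightarrow>
      measure (trunc_noise \<sigma> Rh) {z \<in> space (trunc_noise \<sigma> Rh). w \<bullet> (matrix_inv Q *v z) \<le> r} \<ge> 1 - 1 / real T"
  proof (intro allI impI)
    fix w :: "real^'n" and r :: real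
    assume w: "norm w = 1" and r: "r \<ge> \<sigma> * sqrt (2 * ln (real T))"
    have "0 \<le> \<sigma> * sqrt (2 * ln (real T))"
      using assms(1,3) by simp
    with r have "0 \<le> r" by linarith
    have "w \<bullet> (matrix_inv Q *v z) = (Q *v w) \<bullet> z" for z
      unfolding Q_inv by (metis dot_lmul_matrix vector_transpose_matrix)
    moreover have "norm (Q *v w) = 1"
      using assms(5) w by (simp add: orthogonal_matrix_norm)
    ultimately show "measure (trunc_noise \<sigma> Rh) {z \<in> space (trunc_noise \<sigma> Rh). w \<bullet> (matrix_inv Q *v z) \<le> r} \<ge> 1 - 1 / real T"
      using prob_inner_trunc_noise_le[OF assms(1,2) _ \<open>0 \<le> r\<close>, of "Q *v w"]
        exp_neg_square_le_inverse[OF assms(1,3) r] by simp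
  qed
qed

end
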